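(* Let $\alpha$ be a Young tableau with $k$ boxes and $r$ rows and $x_1,\dots,x_r\in\mathcal{H}$. Then $\pi^\alpha(x_{\alpha(1)}\otimes\cdots\otimes x_{\alpha(k)})\neq0$ if and only if $x_1\wedge\cdots\wedge x_r\ne0$ (i.e. $x_1,\dots,x_r$ are linearly independent), and in that case the projective class of $\pi^\alpha(x_{\alpha(1)}\otimes\cdots\otimes x_{\alpha(k)})$ depends only on the projective classes of $x_1,\dots,x_r$.
   Context: $\mathcal{H}$ is a finite-dimensional complex Hilbert space. Young tableau $\alpha$: a partition $k=\lambda_1+\cdots+\lambda_r$, $\lambda_1\ge\cdots\ge\lambda_r\ge1$, drawn as left-aligned rows of $\lambda_i$ boxes, boxes numbered bijectively by $1,\dots,k$; $\alpha(i)$ is the row index of the box numbered $i$. $S_k$ acts on $\mathcal{H}^{\otimes k}$ by permuting factors, $\sigma(y_1\otimes\cdots\otimes y_k)=y_{\sigma(1)}\otimes\cdots\otimes y_{\sigma(k)}$. $P_\alpha$, $Q_\alpha$ are the row- and column-preserving subgroups; $c_\alpha=\big(\sum_{\tau\in Q_\alpha}(-1)^\tau\tau\big)\circ\big(\sum_{\sigma\in P_\alpha}\sigma\big)$, and $\pi^\alpha=c_\alpha/\mu(\alpha)$ with $\mu(\alpha)\neq0$ the rational number such that $c_\alpha^2=\mu(\alpha)c_\alpha$. *)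

theory Defs
  imports "HOL-Analysis.Analysis" "HOL-Combinatorics.Permutations"
begin

text \<open>The finite-dimensional complex Hilbert space H is modelled as complex ^ 'n
 ('n a finite index type; the inner product plays no role).  The k-fold tensor power
 is modelled by coordinate functions T :: (nat => 'n) => complex on multi-indices,
 where only the values j 1, ..., j k of a multi-index matter.\<close>

type_synonym 'n tensor = "(nat \<Rightarrow> 'n) \<Rightarrow> complex"

definition ptensor :: "nat \<Rightarrow> (nat \<Rightarrow> complex ^ 'n) \<Rightarrow> 'n tensor" where
  "ptensor k y = (\<lambda>j. \<Prod>i\<in>{1..k}. y i $ j i)"

text \<open>Action of a permutation sigma of {1..k}:
 sigma(y 1 (x)...(x) y k) = y (sigma 1) (x) ... (x) y (sigma k), extended linearly.\<close>
definition perm_act :: "(nat \<Rightarrow> nat) \<Rightarrow> 'n tensor \<Rightarrow> 'n tensor" where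
  "perm_act \<sigma> T = (\<lambda>j. T (j \<circ> inv \<sigma>))"

definition young_boxes :: "nat \<Rightarrow> (nat \<Rightarrow> nat) \<Rightarrow> (nat \<times> nat) set" where
  "young_boxes r lam = {(i, j). 1 \<le> i \<and> i \<le> r \<and> 1 \<le> j \<and> j \<le> lam i}"

definition young_tableau :: "nat \<Rightarrow> nat \<Rightarrow> (nat \<Rightarrow> nat) \<Rightarrow> (nat \<Rightarrow> nat \<times> nat) \<Rightarrow> bool" where
  "young_tableau k r lam num \<longleftrightarrow>
     (\<forall>i\<in>{1..r}. lam i \<ge> 1) \<and> (\<forall>i j. 1 \<le> i \<longrightarrow> i \<le> j \<longrightarrow> j \<le> r \<longrightarrow> lam j \<le> lam i) \<and>
     k = (\<Sum>i=1..r. lam i) \<and> bij_betw num {1..k} (young_boxes r lam)"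

text \<open>alpha(i): the row index of the box numbered i; similarly the column index.\<close>
definition tab_row :: "(nat \<Rightarrow> nat \<times> nat) \<Rightarrow> nat \<Rightarrow> nat" where
  "tab_row num i = fst (num i)"
definition tab_col :: "(nat \<Rightarrow> nat \<times> nat) \<Rightarrow> nat \<Rightarrow> nat" where
  "tab_col num i = snd (num i)"

definition row_group :: "nat \<Rightarrow> (nat \<Rightarrow> nat \<times> nat) \<Rightarrow> (nat \<Rightarrow> nat) set" where
  "row_group k num = {\<sigma>. \<sigma> permutes {1..k} \<and> (\<forall>i\<in>{1..k}. tab_row num (\<sigma> i) = tab_row num i)}"
definition col_group :: "nat \<Rightarrow> (nat \<Rightarrow> nat \<times> nat) \<Rightarrow> (nat \<Rightarrow> nat) set" where
  "col_group k num = {\<sigma>. \<sigma> permutes {1..k} \<and> (\<forall>i\<in>{1..k}. tab_col num (\<sigma> i) = tab_col num i)}"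

text \<open>Group algebra Q[S_k]: functions on permutations of {1..k}; product = convolution
 w.r.t. composition of permutations.\<close>
definition ga_mult :: "nat \<Rightarrow> ((nat \<Rightarrow> nat) \<Rightarrow> rat) \<Rightarrow> ((nat \<Rightarrow> nat) \<Rightarrow> rat) \<Rightarrow> ((nat \<Rightarrow> nat) \<Rightarrow> rat)" where
  "ga_mult k f g = (\<lambda>x. \<Sum>a\<in>{p. p permutes {1..k}}. \<Sum>b\<in>{p. p permutes {1..k}}.
                        if a \<circ> b = x then f a * g b else 0)"

definition young_sym_ga :: "nat \<Rightarrow> (nat \<Rightarrow> nat \<times> nat) \<Rightarrow> ((nat \<Rightarrow> nat) \<Rightarrow> rat)" where
  "young_sym_ga k num = (\<lambda>x. \<Sum>\<tau>\<in>col_group k num. \<Sum>\<sigma>\<in>row_group k num.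
                              if \<tau> \<circ> \<sigma> = x then of_int (sign \<tau>) else 0)"

definition young_mu :: "nat \<Rightarrow> (nat \<Rightarrow> nat \<times> nat) \<Rightarrow> rat" where
  "young_mu k num = (THE \<mu>. \<mu> \<noteq> 0 \<and>
      ga_mult k (young_sym_ga k num) (young_sym_ga k num) = (\<lambda>x. \<mu> * young_sym_ga k num x))"

definition young_sym :: "nat \<Rightarrow> (nat \<Rightarrow> nat \<times> nat) \<Rightarrow> 'n tensor \<Rightarrow> 'n tensor" where
  "young_sym k num T = (\<lambda>j. \<Sum>\<tau>\<in>col_group k num. of_int (sign \<tau>) *
       perm_act \<tau> (\<lambda>j'. \<Sum>\<sigma>\<in>row_group k num. perm_act \<sigma> T j') j)"

definition young_proj :: "nat \<Rightarrow> (nat \<Rightarrow> nat \<times> nat) \<Rightarrow> 'n tensor \<Rightarrow> 'n tensor" where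
  "young_proj k num T = (\<lambda>j. young_sym k num T j / of_rat (young_mu k num))"

end

theory Submission
  imports Defs
begin

(*
  Let c = (\<Sum>\<tau>\<in>Q. sign \<tau> \<cdot> \<tau>)(\<Sum>\<sigma>\<in>P. \<sigma>) be the Young symmetrizer of a tableau with row group P
  and column group Q.

  By von Neumann's lemma, every f in Q[S_k] with
  f(q x) = sign q \<cdot> f(x) for q \<in> Q and f(x p) = f(x) for p \<in> P equals f(id) \<cdot> c; the
  combinatorial input is that for x \<notin> Q P some transposition t \<in> Q has x\<inverse> t x \<in> P.  Hence
  c\<^sup>2 = \<mu> c with \<mu> = (c\<^sup>2)(id).  Positivity of \<mu> comes from e = (\<Sum>\<sigma>\<in>P. \<sigma>) c, which is
  invariant under x \<mapsto> x\<inverse> and satisfies e\<^sup>2 = |P| \<mu> e; evaluating at id gives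
  |P|\<^sup>2 \<mu> = \<Sum>x e(x)\<^sup>2 \<ge> e(id)\<^sup>2 = |P|\<^sup>2.  So young_mu is this \<mu> and it is nonzero.

  P fixes x_{\<alpha>(1)} \<otimes> ... \<otimes> x_{\<alpha>(k)}, so \<pi>^\<alpha> of it is |P|/\<mu> times its column
  antisymmetrization col_alt x x.  This is multilinear and alternating in the vectors of the
  first column, which meets every row once, so it vanishes for dependent x; for independent x,
  pairing it with \<phi>_{\<alpha>(1)} \<otimes> ... \<otimes> \<phi>_{\<alpha>(k)} for a dual family \<phi> gives 1.  Rescaling each x_s
  rescales it by a nonzero factor.
*)

section \<open>Permutations preserving a labelling\<close>

text \<open>The permutations of {1..k} that preserve a labelling f of the positions; row and column
  groups of a tableau are of this form, and so is S_k itself (constant labelling).\<close>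
definition label_perms :: "nat \<Rightarrow> (nat \<Rightarrow> 'b) \<Rightarrow> (nat \<Rightarrow> nat) set" where
  "label_perms k f = {\<sigma>. \<sigma> permutes {1..k} \<and> (\<forall>i\<in>{1..k}. f (\<sigma> i) = f i)}"

lemma row_group_label_perms: "row_group k num = label_perms k (tab_row num)"
  by (simp add: row_group_def label_perms_def)

lemma col_group_label_perms: "col_group k num = label_perms k (tab_col num)"
  by (simp add: col_group_def label_perms_def)

lemma label_permsI:
  "\<sigma> permutes {1..k} \<Longrightarrow> (\<And>i. i \<in> {1..k} \<Longrightarrow> f (\<sigma> i) = f i) \<Longrightarrow> \<sigma> \<in> label_perms k f"
  unfolding label_perms_def by blast

lemma label_perms_permutes: "\<sigma> \<in> label_perms k f \<Longrightarrow> \<sigma> permutes {1..k}"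
  by (simp add: label_perms_def)

lemma label_permsD: "\<sigma> \<in> label_perms k f \<Longrightarrow> i \<in> {1..k} \<Longrightarrow> f (\<sigma> i) = f i"
  unfolding label_perms_def by blast

lemma label_perms_in: "\<sigma> \<in> label_perms k f \<Longrightarrow> i \<in> {1..k} \<Longrightarrow> \<sigma> i \<in> {1..k}"
  by (simp only: permutes_in_image[OF label_perms_permutes])

lemma label_perms_id: "id \<in> label_perms k f"
  by (simp add: label_perms_def)

lemma label_perms_comp:
  assumes s: "\<sigma> \<in> label_perms k f" and t: "\<tau> \<in> label_perms k f"
  shows "\<sigma> \<circ> \<tau> \<in> label_perms k f"
proof (rule label_permsI)
  show "\<sigma> \<circ> \<tau> permutes {1..k}"
    by (rule permutes_compose[OF label_perms_permutes[OF t] label_perms_permutes[OF s]])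
  fix i assume i: "i \<in> {1..k}"
  have "f (\<sigma> (\<tau> i)) = f (\<tau> i)" by (rule label_permsD[OF s label_perms_in[OF t i]])
  also have "\<dots> = f i" by (rule label_permsD[OF t i])
  finally show "f ((\<sigma> \<circ> \<tau>) i) = f i" by simp
qed

lemma label_perms_inv:
  assumes s: "\<sigma> \<in> label_perms k f"
  shows "inv \<sigma> \<in> label_perms k f"
proof (rule label_permsI)
  have p: "\<sigma> permutes {1..k}" using s by (rule label_perms_permutes)
  then show "inv \<sigma> permutes {1..k}" by (rule permutes_inv)
  fix i assume "i \<in> {1..k}"
  then have "inv \<sigma> i \<in> {1..k}" using permutes_in_image[OF permutes_inv[OF p]] by blast
  then have "f (\<sigma> (inv \<sigma> i)) = f (inv \<sigma> i)" by (rule label_permsD[OF s])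
  then show "f (inv \<sigma> i) = f i" using p by (simp add: permutes_inverses(1))
qed

lemma finite_label_perms: "finite (label_perms k f)"
  by (rule finite_subset[OF _ finite_permutations[of "{1..k}"]]) (auto simp: label_perms_def)

lemma label_perms_permutation: "\<sigma> \<in> label_perms k f \<Longrightarrow> permutation \<sigma>"
  by (rule permutes_imp_permutation[OF _ label_perms_permutes]) simp_all

lemma label_perms_bij_left:
  assumes s: "\<sigma> \<in> label_perms k f"
  shows "bij_betw (\<lambda>\<tau>. \<sigma> \<circ> \<tau>) (label_perms k f) (label_perms k f)"
proof (rule bij_betw_byWitness[where f'="\<lambda>\<tau>. inv \<sigma> \<circ> \<tau>"])
  have p: "\<sigma> permutes {1..k}" using s by (rule label_perms_permutes)
  show "\<forall>a\<in>label_perms k f. inv \<sigma> \<circ> (\<sigma> \<circ> a) = a" "\<forall>a\<in>label_perms k f. \<sigma> \<circ> (inv \<sigma> \<circ> a) = a"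
    using p by (simp_all add: o_assoc permutes_inv_o)
qed (use s in \<open>auto simp: label_perms_comp label_perms_inv\<close>)

lemma label_perms_bij_right:
  assumes s: "\<sigma> \<in> label_perms k f"
  shows "bij_betw (\<lambda>\<tau>. \<tau> \<circ> \<sigma>) (label_perms k f) (label_perms k f)"
proof (rule bij_betw_byWitness[where f'="\<lambda>\<tau>. \<tau> \<circ> inv \<sigma>"])
  have p: "\<sigma> permutes {1..k}" using s by (rule label_perms_permutes)
  show "\<forall>a\<in>label_perms k f. a \<circ> \<sigma> \<circ> inv \<sigma> = a" "\<forall>a\<in>label_perms k f. a \<circ> inv \<sigma> \<circ> \<sigma> = a"
    using p by (simp_all add: o_assoc[symmetric] permutes_inv_o)
qed (use s in \<open>auto simp: label_perms_comp label_perms_inv\<close>)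

lemma sum_label_perms_inv: "sum F (label_perms k f) = (\<Sum>a\<in>label_perms k f. F (inv a))"
proof -
  have "bij_betw inv (label_perms k f) (label_perms k f)"
    by (rule bij_betw_byWitness[where f'=inv])
      (auto simp: label_perms_inv inv_inv_eq[OF permutes_bij[OF label_perms_permutes]])
  then show ?thesis by (rule sum.reindex_bij_betw[symmetric])
qed

definition Sk :: "nat \<Rightarrow> (nat \<Rightarrow> nat) set" where
  "Sk k = {p. p permutes {1..k}}"

lemma Sk_label_perms: "Sk k = label_perms k (\<lambda>_::nat. ())"
  by (simp add: Sk_def label_perms_def)

lemma Sk_iff: "x \<in> Sk k \<longleftrightarrow> x permutes {1..k}"
  by (simp add: Sk_def)

lemma label_perms_Sk: "p \<in> label_perms k f \<Longrightarrow> p \<in> Sk k"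
  unfolding Sk_iff by (rule label_perms_permutes)

lemma label_perms_subset_Sk: "label_perms k f \<subseteq> Sk k"
  using label_perms_Sk by blast

lemma Sk_comp: "a \<in> Sk k \<Longrightarrow> b \<in> Sk k \<Longrightarrow> a \<circ> b \<in> Sk k"
  unfolding Sk_label_perms by (rule label_perms_comp)

lemma Sk_inv: "a \<in> Sk k \<Longrightarrow> inv a \<in> Sk k"
  unfolding Sk_label_perms by (rule label_perms_inv)

lemma Sk_id: "id \<in> Sk k"
  unfolding Sk_label_perms by (rule label_perms_id)

lemma finite_Sk: "finite (Sk k)"
  unfolding Sk_label_perms by (rule finite_label_perms)

lemma Sk_bij_left: "a \<in> Sk k \<Longrightarrow> bij_betw (\<lambda>b. a \<circ> b) (Sk k) (Sk k)"
  unfolding Sk_label_perms by (rule label_perms_bij_left)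

lemma Sk_inv_o: "a \<in> Sk k \<Longrightarrow> inv a \<circ> a = id" "a \<in> Sk k \<Longrightarrow> a \<circ> inv a = id"
  unfolding Sk_iff by (simp_all add: permutes_inv_o)

lemma Sk_inverses: "a \<in> Sk k \<Longrightarrow> inv a (a i) = i" "a \<in> Sk k \<Longrightarrow> a (inv a i) = i"
  unfolding Sk_iff by (simp_all add: permutes_inverses)

lemma Sk_inv_inv: "a \<in> Sk k \<Longrightarrow> inv (inv a) = a"
  unfolding Sk_iff by (simp add: inv_inv_eq permutes_bij)

lemma Sk_inv_comp: "a \<in> Sk k \<Longrightarrow> b \<in> Sk k \<Longrightarrow> inv (a \<circ> b) = inv b \<circ> inv a"
  unfolding Sk_iff by (simp add: o_inv_distrib permutes_bij)

lemma Sk_cancel_left: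
  assumes "a \<in> Sk k" shows "a \<circ> f = a \<circ> g \<longleftrightarrow> f = g"
proof
  assume "a \<circ> f = a \<circ> g"
  then have "inv a \<circ> (a \<circ> f) = inv a \<circ> (a \<circ> g)" by simp
  then show "f = g" by (simp add: o_assoc Sk_inv_o(1)[OF assms])
qed simp

lemma Sk_cancel_right:
  assumes "a \<in> Sk k" shows "f \<circ> a = g \<circ> a \<longleftrightarrow> f = g"
proof
  assume "f \<circ> a = g \<circ> a"
  then have "(f \<circ> a) \<circ> inv a = (g \<circ> a) \<circ> inv a" by simp
  then show "f = g" by (simp add: o_assoc[symmetric] Sk_inv_o(2)[OF assms])
qed simp

section \<open>The group algebra Q[S_k]\<close>

lemma ga_mult_out:
  assumes "x \<notin> Sk k" shows "ga_mult k f g x = 0"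
  unfolding ga_mult_def Sk_def[symmetric]
proof (intro sum.neutral ballI)
  fix a b assume "a \<in> Sk k" "b \<in> Sk k"
  then have "a \<circ> b \<noteq> x" using Sk_comp assms by blast
  then show "(if a \<circ> b = x then f a * g b else 0) = 0" by simp
qed

lemma ga_mult_eq:
  assumes x: "x \<in> Sk k"
  shows "ga_mult k f g x = (\<Sum>a\<in>Sk k. f a * g (inv a \<circ> x))"
  unfolding ga_mult_def Sk_def[symmetric]
proof (rule sum.cong[OF refl])
  fix a assume a: "a \<in> Sk k"
  have ax: "a \<circ> (inv a \<circ> x) = x" by (simp add: o_assoc Sk_inv_o(2)[OF a])
  have eq: "a \<circ> b = x \<longleftrightarrow> b = inv a \<circ> x" for b
    using Sk_cancel_left[OF a, of b "inv a \<circ> x"] unfolding ax .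
  have "(\<Sum>b\<in>Sk k. if a \<circ> b = x then f a * g b else 0)
      = (\<Sum>b\<in>Sk k. if b = inv a \<circ> x then f a * g b else 0)"
    by (simp only: eq)
  also have "\<dots> = f a * g (inv a \<circ> x)"
    using Sk_comp[OF Sk_inv[OF a] x] by (simp add: finite_Sk)
  finally show "(\<Sum>b\<in>Sk k. if a \<circ> b = x then f a * g b else 0) = f a * g (inv a \<circ> x)" .
qed

lemma ga_mult_eq':
  assumes x: "x \<in> Sk k"
  shows "ga_mult k f g x = (\<Sum>b\<in>Sk k. f (x \<circ> inv b) * g b)"
proof -
  have "ga_mult k f g x = (\<Sum>b\<in>Sk k. \<Sum>a\<in>Sk k. if a \<circ> b = x then f a * g b else 0)"
    unfolding ga_mult_def Sk_def[symmetric] by (rule sum.swap)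
  also have "\<dots> = (\<Sum>b\<in>Sk k. f (x \<circ> inv b) * g b)"
  proof (rule sum.cong[OF refl])
    fix b assume b: "b \<in> Sk k"
    have xb: "(x \<circ> inv b) \<circ> b = x" by (simp add: o_assoc[symmetric] Sk_inv_o(1)[OF b])
    have eq: "a \<circ> b = x \<longleftrightarrow> a = x \<circ> inv b" for a
      using Sk_cancel_right[OF b, of a "x \<circ> inv b"] unfolding xb .
    have "(\<Sum>a\<in>Sk k. if a \<circ> b = x then f a * g b else 0)
        = (\<Sum>a\<in>Sk k. if a = x \<circ> inv b then f a * g b else 0)"
      by (simp only: eq)
    also have "\<dots> = f (x \<circ> inv b) * g b"
      using Sk_comp[OF x Sk_inv[OF b]] by (simp add: finite_Sk)
    finally show "(\<Sum>a\<in>Sk k. if a \<circ> b = x then f a * g b else 0) = f (x \<circ> inv b) * g b" .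
  qed
  finally show ?thesis .
qed

lemma ga_mult_scale_left: "ga_mult k (\<lambda>y. s * f y) g = (\<lambda>x. s * ga_mult k f g x)"
  unfolding ga_mult_def by (auto simp: sum_distrib_left mult.assoc intro!: sum.cong)

lemma ga_mult_scale_right: "ga_mult k f (\<lambda>y. s * g y) = (\<lambda>x. s * ga_mult k f g x)"
  unfolding ga_mult_def by (auto simp: sum_distrib_left mult.left_commute intro!: sum.cong)

lemma ga_mult_translate_left:
  assumes q: "q \<in> Sk k" and y: "y \<in> Sk k"
  shows "ga_mult k f g (q \<circ> y) = ga_mult k (\<lambda>a. f (q \<circ> a)) g y"
proof -
  have "ga_mult k f g (q \<circ> y) = (\<Sum>a\<in>Sk k. f (q \<circ> a) * g (inv (q \<circ> a) \<circ> (q \<circ> y)))"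
    unfolding ga_mult_eq[OF Sk_comp[OF q y]]
    by (rule sum.reindex_bij_betw[OF Sk_bij_left[OF q], symmetric])
  also have "\<dots> = ga_mult k (\<lambda>a. f (q \<circ> a)) g y"
    unfolding ga_mult_eq[OF y] using q
    by (intro sum.cong refl) (simp add: Sk_inv_comp o_assoc, simp add: Sk_inv_o(1) flip: o_assoc)
  finally show ?thesis .
qed

lemma ga_assoc: "ga_mult k (ga_mult k f g) h = ga_mult k f (ga_mult k g h)"
proof
  fix x
  show "ga_mult k (ga_mult k f g) h x = ga_mult k f (ga_mult k g h) x"
  proof (cases "x \<in> Sk k")
    case False
    then show ?thesis by (simp add: ga_mult_out)
  next
    case x: True
    have inner: "(\<Sum>a\<in>Sk k. g (inv a' \<circ> a) * h (inv a \<circ> x)) = ga_mult k g h (inv a' \<circ> x)"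
      if a': "a' \<in> Sk k" for a'
    proof -
      have "(\<Sum>a\<in>Sk k. g (inv a' \<circ> a) * h (inv a \<circ> x))
          = (\<Sum>b\<in>Sk k. g (inv a' \<circ> (a' \<circ> b)) * h (inv (a' \<circ> b) \<circ> x))"
        by (rule sum.reindex_bij_betw[OF Sk_bij_left[OF a'], symmetric])
      also have "\<dots> = (\<Sum>b\<in>Sk k. g b * h (inv b \<circ> (inv a' \<circ> x)))"
      proof (rule sum.cong[OF refl])
        fix b assume b: "b \<in> Sk k"
        have "inv a' \<circ> (a' \<circ> b) = b" by (simp add: o_assoc Sk_inv_o(1)[OF a'])
        moreover have "inv (a' \<circ> b) \<circ> x = inv b \<circ> (inv a' \<circ> x)"
          by (simp add: Sk_inv_comp[OF a' b] o_assoc)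
        ultimately show "g (inv a' \<circ> (a' \<circ> b)) * h (inv (a' \<circ> b) \<circ> x) = g b * h (inv b \<circ> (inv a' \<circ> x))"
          by simp
      qed
      finally show ?thesis using a' x by (simp add: ga_mult_eq Sk_comp Sk_inv)
    qed
    have "ga_mult k (ga_mult k f g) h x
        = (\<Sum>a\<in>Sk k. \<Sum>a'\<in>Sk k. f a' * g (inv a' \<circ> a) * h (inv a \<circ> x))"
      using x by (simp add: ga_mult_eq sum_distrib_right)
    also have "\<dots> = (\<Sum>a'\<in>Sk k. f a' * (\<Sum>a\<in>Sk k. g (inv a' \<circ> a) * h (inv a \<circ> x)))"
      by (subst sum.swap) (simp add: sum_distrib_left mult.assoc)
    also have "\<dots> = ga_mult k f (ga_mult k g h) x"
      using x by (simp add: ga_mult_eq inner)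
    finally show ?thesis .
  qed
qed

lemma card_by_fibres:
  assumes "finite A"
  shows "card {i\<in>A. \<Phi> i} = (\<Sum>j\<in>g ` A. card {i\<in>A. g i = j \<and> \<Phi> i})"
proof -
  have "{i\<in>A. \<Phi> i} = (\<Union>j\<in>g ` A. {i\<in>A. g i = j \<and> \<Phi> i})" by auto
  also have "card \<dots> = (\<Sum>j\<in>g ` A. card {i\<in>A. g i = j \<and> \<Phi> i})"
    by (rule card_UN_disjoint) (use assms in auto)
  finally show ?thesis .
qed

section \<open>Tableaux and von Neumann's lemma\<close>

locale tableau =
  fixes k r :: nat and lam :: "nat \<Rightarrow> nat" and num :: "nat \<Rightarrow> nat \<times> nat"
  assumes young: "young_tableau k r lam num"
begin

abbreviation "trow \<equiv> tab_row num"
abbreviation "tcol \<equiv> tab_col num"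
abbreviation "Prow \<equiv> label_perms k trow"
abbreviation "Qcol \<equiv> label_perms k tcol"
abbreviation "csym \<equiv> young_sym_ga k num"

lemma lam_pos: "s \<in> {1..r} \<Longrightarrow> 1 \<le> lam s"
  using young by (simp add: young_tableau_def)

lemma lam_mono: "1 \<le> s \<Longrightarrow> s \<le> t \<Longrightarrow> t \<le> r \<Longrightarrow> lam t \<le> lam s"
  using young by (simp add: young_tableau_def)

lemma num_bij: "bij_betw num {1..k} (young_boxes r lam)"
  using young unfolding young_tableau_def by blast

lemma box_bounds:
  assumes "i \<in> {1..k}"
  shows "trow i \<in> {1..r}" and "1 \<le> tcol i" and "tcol i \<le> lam (trow i)"
  using bij_betw_apply[OF num_bij assms]
  by (auto simp: young_boxes_def tab_row_def tab_col_def split: prod.splits)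

lemma box_eq:
  assumes "i \<in> {1..k}" "j \<in> {1..k}" "trow i = trow j" "tcol i = tcol j"
  shows "i = j"
proof -
  have "num i = num j" using assms(3,4) by (simp add: tab_row_def tab_col_def prod_eq_iff)
  then show ?thesis using bij_betw_imp_inj_on[OF num_bij] assms(1,2) by (auto dest: inj_onD)
qed

lemma box_exists:
  assumes "s \<in> {1..r}" "1 \<le> j" "j \<le> lam s"
  shows "\<exists>i\<in>{1..k}. trow i = s \<and> tcol i = j"
proof -
  have "(s, j) \<in> num ` {1..k}"
    using assms bij_betw_imp_surj_on[OF num_bij] by (simp add: young_boxes_def)
  then obtain i where "i \<in> {1..k}" "num i = (s, j)" by (metis imageE)
  then show ?thesis by (intro bexI[of _ i]) (simp_all add: tab_row_def tab_col_def)
qed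

lemma first_column_box: "s \<in> {1..r} \<Longrightarrow> \<exists>b\<in>{1..k}. trow b = s \<and> tcol b = 1"
  using box_exists[of s 1] lam_pos[of s] by auto

lemma row_col_trivial:
  assumes p: "\<sigma> \<in> Prow" and q: "\<sigma> \<in> Qcol"
  shows "\<sigma> = id"
proof
  fix i show "\<sigma> i = id i"
  proof (cases "i \<in> {1..k}")
    case True
    then show ?thesis
      using box_eq[OF label_perms_in[OF p True] True label_permsD[OF p True] label_permsD[OF q True]] by simp
  next
    case False
    then show ?thesis using permutes_not_in[OF label_perms_permutes[OF p]] by simp
  qed
qed

lemma csym_eq: "csym x = (\<Sum>\<tau>\<in>Qcol. \<Sum>\<sigma>\<in>Prow. if \<tau> \<circ> \<sigma> = x then of_int (sign \<tau>) else 0)"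
  unfolding young_sym_ga_def row_group_label_perms col_group_label_perms ..

lemma csym_out: "x \<notin> Sk k \<Longrightarrow> csym x = 0"
  unfolding csym_eq
  by (intro sum.neutral ballI) (auto dest: label_perms_Sk Sk_comp)

lemma csym_left:
  assumes q: "q \<in> Qcol"
  shows "csym (q \<circ> x) = of_int (sign q) * csym x"
proof -
  have "csym (q \<circ> x) = (\<Sum>\<tau>\<in>Qcol. \<Sum>\<sigma>\<in>Prow. if (q \<circ> \<tau>) \<circ> \<sigma> = q \<circ> x then of_int (sign (q \<circ> \<tau>)) else 0)"
    unfolding csym_eq by (rule sum.reindex_bij_betw[OF label_perms_bij_left[OF q], symmetric])
  also have "\<dots> = (\<Sum>\<tau>\<in>Qcol. \<Sum>\<sigma>\<in>Prow. of_int (sign q) * (if \<tau> \<circ> \<sigma> = x then of_int (sign \<tau>) else 0))"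
  proof (intro sum.cong refl)
    fix \<tau> \<sigma> assume t: "\<tau> \<in> Qcol"
    have "(q \<circ> \<tau>) \<circ> \<sigma> = q \<circ> x \<longleftrightarrow> \<tau> \<circ> \<sigma> = x"
      by (simp only: o_assoc[symmetric] Sk_cancel_left[OF label_perms_Sk[OF q]])
    moreover have "sign (q \<circ> \<tau>) = sign q * sign \<tau>"
      by (rule sign_compose[OF label_perms_permutation[OF q] label_perms_permutation[OF t]])
    ultimately show "(if (q \<circ> \<tau>) \<circ> \<sigma> = q \<circ> x then of_int (sign (q \<circ> \<tau>)) else 0)
        = of_int (sign q) * (if \<tau> \<circ> \<sigma> = x then of_int (sign \<tau>) else (0::rat))"
      by simp
  qed
  also have "\<dots> = of_int (sign q) * csym x"
    unfolding csym_eq by (simp add: sum_distrib_left)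
  finally show ?thesis .
qed

lemma csym_right:
  assumes p: "p \<in> Prow"
  shows "csym (x \<circ> p) = csym x"
proof -
  have "csym (x \<circ> p) = (\<Sum>\<tau>\<in>Qcol. \<Sum>\<sigma>\<in>Prow. if \<tau> \<circ> (\<sigma> \<circ> p) = x \<circ> p then of_int (sign \<tau>) else 0)"
    unfolding csym_eq by (intro sum.cong refl sum.reindex_bij_betw[OF label_perms_bij_right[OF p], symmetric])
  also have "\<dots> = csym x"
    unfolding csym_eq by (simp only: o_assoc Sk_cancel_right[OF label_perms_Sk[OF p]])
  finally show ?thesis .
qed

text \<open>The coefficient of id in c is 1, since P \<inter> Q = {id}.\<close>
lemma csym_id: "csym id = 1"
proof -
  have "csym id = (\<Sum>\<tau>\<in>Qcol. if \<tau> = id then 1 else 0)"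
    unfolding csym_eq
  proof (rule sum.cong[OF refl])
    fix \<tau> assume t: "\<tau> \<in> Qcol"
    have "\<tau> \<circ> \<sigma> = id \<longleftrightarrow> \<tau> = id \<and> \<sigma> = id" if s: "\<sigma> \<in> Prow" for \<sigma>
    proof
      assume e: "\<tau> \<circ> \<sigma> = id"
      have "\<tau> = (\<tau> \<circ> \<sigma>) \<circ> inv \<sigma>"
        by (simp add: o_assoc[symmetric] Sk_inv_o(2)[OF label_perms_Sk[OF s]])
      then have "\<tau> \<in> Prow" using e label_perms_inv[OF s] by simp
      then have "\<tau> = id" using row_col_trivial t by blast
      then show "\<tau> = id \<and> \<sigma> = id" using e by simp
    qed simp
    then have "(\<Sum>\<sigma>\<in>Prow. if \<tau> \<circ> \<sigma> = id then of_int (sign \<tau>) else 0)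
        = (\<Sum>\<sigma>\<in>Prow. if \<tau> = id then (if \<sigma> = id then 1 else 0) else (0::rat))"
      by (intro sum.cong refl) auto
    then show "(\<Sum>\<sigma>\<in>Prow. if \<tau> \<circ> \<sigma> = id then of_int (sign \<tau>) else 0) = (if \<tau> = id then 1 else (0::rat))"
      using label_perms_id[of k trow] by (simp add: finite_label_perms)
  qed
  also have "\<dots> = 1" using label_perms_id[of k tcol] by (simp add: finite_label_perms)
  finally show ?thesis .
qed

subsection \<open>The combinatorial lemma\<close>

text \<open>h sends distinct boxes of one column to boxes in distinct rows.  For h = x\<inverse> this says
  that no two entries of a column of the tableau lie in one row of the tableau relabelled by x.\<close>
definition col_injective :: "(nat \<Rightarrow> nat) \<Rightarrow> bool" where
  "col_injective h \<longleftrightarrow>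
     (\<forall>i\<in>{1..k}. \<forall>j\<in>{1..k}. i \<noteq> j \<longrightarrow> tcol i = tcol j \<longrightarrow> trow (h i) \<noteq> trow (h j))"

lemma perm_row_count:
  assumes h: "h permutes {1..k}"
  shows "card {i\<in>{1..k}. trow (h i) \<le> s} = card {i\<in>{1..k}. trow i \<le> s}"
proof -
  have "{i\<in>{1..k}. trow i \<le> s} = h ` {i\<in>{1..k}. trow (h i) \<le> s}"
  proof (intro equalityI subsetI)
    fix m assume m: "m \<in> {i\<in>{1..k}. trow i \<le> s}"
    have "inv h m \<in> {1..k}" using m permutes_in_image[OF permutes_inv[OF h]] by simp
    then show "m \<in> h ` {i\<in>{1..k}. trow (h i) \<le> s}"
      using m permutes_inverses(1)[OF h, of m] by (intro image_eqI[of _ _ "inv h m"]) auto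
  qed (use permutes_in_image[OF h] in auto)
  then show ?thesis using card_image[OF permutes_inj_on[OF h]] by simp
qed

text \<open>Within one column j, a column-injective h puts at most as many boxes into the first s rows
  as the column itself has there: either the column ends above row s, or it meets all of them.\<close>
lemma column_count_le:
  assumes hk: "\<And>i. i \<in> {1..k} \<Longrightarrow> h i \<in> {1..k}" and inj: "col_injective h"
  shows "card {i\<in>{1..k}. tcol i = j \<and> trow (h i) \<le> s} \<le> card {i\<in>{1..k}. tcol i = j \<and> trow i \<le> s}"
    (is "card ?L \<le> card ?R")
proof (cases "\<exists>i\<in>{1..k}. tcol i = j \<and> s < trow i")
  case False
  then have "?L \<subseteq> ?R" by auto
  then show ?thesis by (intro card_mono) simp_all
next
  case True
  then obtain i1 where i1: "i1 \<in> {1..k}" "tcol i1 = j" "s < trow i1" by blast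
  have "card ?L \<le> card {1..s}"
  proof (rule card_inj_on_le)
    show "inj_on (\<lambda>i. trow (h i)) ?L" using inj unfolding col_injective_def inj_on_def by blast
    show "(\<lambda>i. trow (h i)) ` ?L \<subseteq> {1..s}" using box_bounds(1)[OF hk] by auto
  qed simp
  also have "card {1..s} \<le> card (trow ` ?R)"
  proof (rule card_mono)
    show "{1..s} \<subseteq> trow ` ?R"
    proof
      fix t assume t: "t \<in> {1..s}"
      have r1: "trow i1 \<in> {1..r}" by (rule box_bounds(1)[OF i1(1)])
      have "j \<le> lam (trow i1)" using box_bounds(3)[OF i1(1)] i1(2) by simp
      also have "\<dots> \<le> lam t" using lam_mono[of t "trow i1"] t i1(3) r1 by simp
      finally obtain i where "i \<in> {1..k}" "trow i = t" "tcol i = j"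
        using box_exists[of t j] box_bounds(2)[OF i1(1)] i1 t r1 by auto
      then show "t \<in> trow ` ?R" using t by force
    qed
  qed simp
  also have "\<dots> \<le> card ?R" by (rule card_image_le) simp
  finally show ?thesis .
qed

text \<open>Summing over the columns, the inequalities of the previous lemma add up to an equality,
  so each of them is an equality.\<close>
lemma column_count_eq:
  assumes h: "h permutes {1..k}" and inj: "col_injective h"
  shows "card {i\<in>{1..k}. tcol i = j \<and> trow (h i) \<le> s} = card {i\<in>{1..k}. tcol i = j \<and> trow i \<le> s}"
proof (cases "j \<in> tcol ` {1..k}")
  case True
  have hk: "\<And>i. i \<in> {1..k} \<Longrightarrow> h i \<in> {1..k}" using permutes_in_image[OF h] by simp
  show ?thesis
  proof (rule sum_mono_inv[OF _ _ True])
    have "(\<Sum>j\<in>tcol ` {1..k}. card {i\<in>{1..k}. tcol i = j \<and> trow (h i) \<le> s})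
        = card {i\<in>{1..k}. trow (h i) \<le> s}"
      by (rule card_by_fibres[symmetric]) simp
    also have "\<dots> = card {i\<in>{1..k}. trow i \<le> s}" by (rule perm_row_count[OF h])
    also have "\<dots> = (\<Sum>j\<in>tcol ` {1..k}. card {i\<in>{1..k}. tcol i = j \<and> trow i \<le> s})"
      by (rule card_by_fibres) simp
    finally show "(\<Sum>j\<in>tcol ` {1..k}. card {i\<in>{1..k}. tcol i = j \<and> trow (h i) \<le> s})
        = (\<Sum>j\<in>tcol ` {1..k}. card {i\<in>{1..k}. tcol i = j \<and> trow i \<le> s})" .
  qed (use column_count_le[OF hk inj] in auto)
next
  case False
  then have "{i\<in>{1..k}. tcol i = j \<and> trow (h i) \<le> s} = {}"
    and "{i\<in>{1..k}. tcol i = j \<and> trow i \<le> s} = {}" by auto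
  then show ?thesis by (simp only: card.empty)
qed

lemma col_injective_fits:
  assumes h: "h permutes {1..k}" and inj: "col_injective h" and i0: "i0 \<in> {1..k}"
  shows "tcol i0 \<le> lam (trow (h i0))"
proof (rule ccontr)
  define j0 where "j0 = tcol i0"
  define s0 where "s0 = trow (h i0)"
  assume "\<not> tcol i0 \<le> lam (trow (h i0))"
  then have short: "lam s0 < j0" by (simp add: j0_def s0_def)
  have s0: "s0 \<in> {1..r}" unfolding s0_def by (rule box_bounds(1)[OF permutes_in_image[OF h, THEN iffD2, OF i0]])
  let ?C = "{i\<in>{1..k}. tcol i = j0}"
  have "trow i \<le> s0 - 1" if "i \<in> ?C" for i
  proof (rule ccontr)
    assume "\<not> trow i \<le> s0 - 1"
    then have "lam (trow i) \<le> lam s0" using lam_mono[of s0 "trow i"] s0 box_bounds(1)[of i] that by auto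
    then show False using box_bounds(3)[of i] that short by auto
  qed
  then have "{i\<in>{1..k}. tcol i = j0 \<and> trow i \<le> s0 - 1} = ?C" by auto
  then have "card {i\<in>{1..k}. tcol i = j0 \<and> trow (h i) \<le> s0 - 1} = card ?C"
    using column_count_eq[OF h inj] by metis
  then have "{i\<in>{1..k}. tcol i = j0 \<and> trow (h i) \<le> s0 - 1} = ?C"
    by (intro card_subset_eq) auto
  then have "s0 \<le> s0 - 1" using i0 unfolding j0_def s0_def by blast
  then show False using s0 by auto
qed

text \<open>The combinatorial lemma: if x\<inverse> is column-injective then x \<in> Q P.  The column permutation q\<inverse>
  moves each box i to the box in row trow(x\<inverse> i) of the same column, which exists by the
  previous lemma.\<close>
lemma col_injective_factor:
  assumes x: "x \<in> Sk k" and inj: "col_injective (inv x)"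
  shows "\<exists>q\<in>Qcol. \<exists>p\<in>Prow. x = q \<circ> p"
proof -
  define h where "h = inv x"
  have h: "h permutes {1..k}" unfolding h_def using Sk_inv[OF x] by (simp add: Sk_iff)
  have hk: "h i \<in> {1..k}" if "i \<in> {1..k}" for i using permutes_in_image[OF h] that by simp
  define g where "g i = (if i \<in> {1..k} then inv_into {1..k} num (trow (h i), tcol i) else i)" for i
  have g: "g i \<in> {1..k} \<and> trow (g i) = trow (h i) \<and> tcol (g i) = tcol i" if i: "i \<in> {1..k}" for i
  proof -
    have "(trow (h i), tcol i) \<in> young_boxes r lam"
      using box_bounds[OF hk[OF i]] box_bounds(2)[OF i] col_injective_fits[OF h inj[unfolded h_def[symmetric]] i]
      by (simp add: young_boxes_def)
    then have y: "(trow (h i), tcol i) \<in> num ` {1..k}" using bij_betw_imp_surj_on[OF num_bij] by simp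
    have "g i = inv_into {1..k} num (trow (h i), tcol i)" using i by (simp add: g_def)
    then have "g i \<in> {1..k}" "num (g i) = (trow (h i), tcol i)"
      using inv_into_into[OF y] f_inv_into_f[OF y] by simp_all
    then show ?thesis by (simp add: tab_row_def tab_col_def)
  qed
  have "inj_on g {1..k}"
  proof (rule inj_onI)
    fix i j assume i: "i \<in> {1..k}" and j: "j \<in> {1..k}" and e: "g i = g j"
    show "i = j" using inj g[OF i] g[OF j] e i j unfolding col_injective_def h_def by metis
  qed
  moreover have "g ` {1..k} \<subseteq> {1..k}" using g by auto
  ultimately have "g permutes {1..k}"
    using endo_inj_surj[of "{1..k}" g] by (intro bij_imp_permutes) (auto simp: bij_betw_def g_def)
  then have gQ: "g \<in> Qcol" using g by (intro label_permsI) auto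
  have "g \<circ> x \<in> Prow"
  proof (rule label_permsI)
    show "g \<circ> x permutes {1..k}"
      using permutes_compose[OF _ \<open>g permutes {1..k}\<close>] x by (simp add: Sk_iff)
    fix m assume m: "m \<in> {1..k}"
    have "x m \<in> {1..k}" using m by (simp only: permutes_in_image[OF x[unfolded Sk_iff]])
    then show "trow ((g \<circ> x) m) = trow m" using g Sk_inverses(1)[OF x] by (simp add: h_def)
  qed
  moreover have "x = inv g \<circ> (g \<circ> x)"
    using Sk_inv_o(1)[of g k] \<open>g permutes {1..k}\<close> by (simp add: o_assoc Sk_iff)
  ultimately show ?thesis using label_perms_inv[OF gQ] by blast
qed

text \<open>A function on S_k that is Q-sign-equivariant on the left and P-invariant on the right vanishes
  off Q P: for x \<notin> Q P some transposition t \<in> Q satisfies x\<inverse> t x \<in> P, so f(x) = f(t x) = -f(x).\<close>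
lemma equivariant_vanish:
  fixes f :: "(nat \<Rightarrow> nat) \<Rightarrow> rat"
  assumes left: "\<And>q y. q \<in> Qcol \<Longrightarrow> y \<in> Sk k \<Longrightarrow> f (q \<circ> y) = of_int (sign q) * f y"
    and right: "\<And>p y. p \<in> Prow \<Longrightarrow> y \<in> Sk k \<Longrightarrow> f (y \<circ> p) = f y"
    and x: "x \<in> Sk k" and notQP: "\<not> (\<exists>q\<in>Qcol. \<exists>p\<in>Prow. x = q \<circ> p)"
  shows "f x = 0"
proof -
  have "\<not> col_injective (inv x)" using col_injective_factor[OF x] notQP by blast
  then obtain i j where ij: "i \<in> {1..k}" "j \<in> {1..k}" "i \<noteq> j" "tcol i = tcol j"
    "trow (inv x i) = trow (inv x j)"
    unfolding col_injective_def by blast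
  define t where "t = Transposition.transpose i j"
  have tperm: "t permutes {1..k}" unfolding t_def using ij by (simp add: permutes_swap_id)
  have tQ: "t \<in> Qcol"
  proof (rule label_permsI[OF tperm])
    fix m show "tcol (t m) = tcol m" unfolding t_def using ij by (cases "m = i"; cases "m = j") auto
  qed
  define p where "p = inv x \<circ> t \<circ> x"
  have pP: "p \<in> Prow"
  proof (rule label_permsI)
    show "p permutes {1..k}" unfolding p_def
      using permutes_compose[OF _ permutes_compose[OF tperm permutes_inv]] x by (simp add: Sk_iff)
    fix m assume m: "m \<in> {1..k}"
    show "trow (p m) = trow m"
      using ij(3,5) Sk_inverses(1)[OF x, of m]
      by (cases "x m = i \<or> x m = j") (auto simp: p_def t_def Transposition.transpose_def)
  qed
  have tt: "t \<circ> t = id" unfolding t_def by (simp add: fun_eq_iff Transposition.transpose_def)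
  have "(t \<circ> x) \<circ> p = t \<circ> (x \<circ> inv x) \<circ> t \<circ> x" unfolding p_def by (simp add: o_assoc)
  also have "\<dots> = x" using Sk_inv_o(2)[OF x] tt by (simp add: o_assoc)
  finally have "f x = f ((t \<circ> x) \<circ> p)" by simp
  also have "\<dots> = f (t \<circ> x)" by (rule right[OF pP Sk_comp[OF label_perms_Sk[OF tQ] x]])
  also have "\<dots> = - f x" using left[OF tQ x] ij(3) by (simp add: t_def sign_swap_id)
  finally show ?thesis by simp
qed

lemma von_neumann:
  fixes f :: "(nat \<Rightarrow> nat) \<Rightarrow> rat"
  assumes out: "\<And>y. y \<notin> Sk k \<Longrightarrow> f y = 0"
    and left: "\<And>q y. q \<in> Qcol \<Longrightarrow> y \<in> Sk k \<Longrightarrow> f (q \<circ> y) = of_int (sign q) * f y"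
    and right: "\<And>p y. p \<in> Prow \<Longrightarrow> y \<in> Sk k \<Longrightarrow> f (y \<circ> p) = f y"
  shows "f x = f id * csym x"
proof (cases "x \<in> Sk k")
  case False
  then show ?thesis using out csym_out by simp
next
  case x: True
  show ?thesis
  proof (cases "\<exists>q\<in>Qcol. \<exists>p\<in>Prow. x = q \<circ> p")
    case True
    then obtain q p where q: "q \<in> Qcol" and p: "p \<in> Prow" and e: "x = q \<circ> p" by blast
    have "f x = of_int (sign q) * f (id \<circ> p)" using left[OF q label_perms_Sk[OF p]] e by simp
    moreover have "csym x = of_int (sign q) * csym (id \<circ> p)" using csym_left[OF q] e by simp
    ultimately show ?thesis using right[OF p Sk_id] csym_right[OF p, of id] csym_id by simp
  next
    case False
    have "f x = 0" by (rule equivariant_vanish[where f = f, OF left right x False])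
    moreover have "csym x = 0"
      by (rule equivariant_vanish[where f = csym, OF _ _ x False]) (simp_all add: csym_left csym_right)
    ultimately show ?thesis by simp
  qed
qed

definition mu0 :: rat where "mu0 = ga_mult k csym csym id"

text \<open>c^2 inherits the equivariance of c on both sides, so von Neumann's lemma gives c^2 = \<mu> c.\<close>
lemma csym_square: "ga_mult k csym csym = (\<lambda>x. mu0 * csym x)"
proof
  fix x
  show "ga_mult k csym csym x = mu0 * csym x"
    unfolding mu0_def
  proof (rule von_neumann)
    show "ga_mult k csym csym y = 0" if "y \<notin> Sk k" for y using that by (rule ga_mult_out)
    show "ga_mult k csym csym (q \<circ> y) = of_int (sign q) * ga_mult k csym csym y"
      if q: "q \<in> Qcol" and y: "y \<in> Sk k" for q y
      unfolding ga_mult_translate_left[OF label_perms_Sk[OF q] y] csym_left[OF q]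
      by (simp add: ga_mult_scale_left)
    show "ga_mult k csym csym (y \<circ> p) = ga_mult k csym csym y" if p: "p \<in> Prow" and y: "y \<in> Sk k" for p y
      using csym_right[OF p]
      by (simp add: ga_mult_eq[OF Sk_comp[OF y label_perms_Sk[OF p]]] ga_mult_eq[OF y] o_assoc)
  qed
qed

text \<open>To see \<mu> \<noteq> 0 we use the sandwiched element e = a c, a = \<Sum>\<sigma>\<in>P. \<sigma>.\<close>
definition row_sum :: "(nat \<Rightarrow> nat) \<Rightarrow> rat" where
  "row_sum x = (if x \<in> Prow then 1 else 0)"

definition sandwich :: "(nat \<Rightarrow> nat) \<Rightarrow> rat" where
  "sandwich = ga_mult k row_sum csym"

lemma sum_row_sum: "(\<Sum>b\<in>Sk k. row_sum b * F b) = (\<Sum>b\<in>Prow. F b)"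
proof -
  have "(\<Sum>b\<in>Sk k. row_sum b * F b) = (\<Sum>b\<in>Sk k. if b \<in> Prow then F b else 0)"
    by (intro sum.cong refl) (simp add: row_sum_def)
  also have "\<dots> = (\<Sum>b\<in>Sk k \<inter> Prow. F b)" by (rule sum.inter_restrict[OF finite_Sk, symmetric])
  finally show ?thesis by (simp add: Int_absorb1[OF label_perms_subset_Sk])
qed

text \<open>c a = |P| c, because c is right P-invariant.\<close>
lemma csym_row_sum: "ga_mult k csym row_sum = (\<lambda>x. of_nat (card Prow) * csym x)"
proof
  fix x show "ga_mult k csym row_sum x = of_nat (card Prow) * csym x"
  proof (cases "x \<in> Sk k")
    case False then show ?thesis by (simp add: ga_mult_out csym_out)
  next
    case x: True
    have "ga_mult k csym row_sum x = (\<Sum>b\<in>Sk k. row_sum b * csym x)"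
      unfolding ga_mult_eq'[OF x] row_sum_def
      by (intro sum.cong refl) (simp add: csym_right[OF label_perms_inv])
    then show ?thesis by (simp add: sum_row_sum)
  qed
qed

text \<open>e^2 = a (c a) c = |P| a c^2 = |P| \<mu> e.\<close>
lemma sandwich_square: "ga_mult k sandwich sandwich = (\<lambda>x. (of_nat (card Prow) * mu0) * sandwich x)"
proof -
  have "ga_mult k sandwich sandwich = ga_mult k row_sum (ga_mult k (ga_mult k csym row_sum) csym)"
    unfolding sandwich_def by (simp only: ga_assoc)
  also have "\<dots> = ga_mult k row_sum (\<lambda>x. (of_nat (card Prow) * mu0) * csym x)"
    by (simp add: csym_row_sum ga_mult_scale_left csym_square mult.assoc)
  also have "\<dots> = (\<lambda>x. (of_nat (card Prow) * mu0) * sandwich x)"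
    unfolding sandwich_def by (rule ga_mult_scale_right)
  finally show ?thesis .
qed

lemma sandwich_eq:
  assumes x: "x \<in> Sk k"
  shows "sandwich x = (\<Sum>a\<in>Prow. \<Sum>\<tau>\<in>Qcol. \<Sum>\<sigma>\<in>Prow. if a \<circ> \<tau> \<circ> \<sigma> = x then of_int (sign \<tau>) else 0)"
proof -
  have "sandwich x = (\<Sum>a\<in>Prow. csym (inv a \<circ> x))"
    unfolding sandwich_def ga_mult_eq[OF x] by (rule sum_row_sum)
  also have "\<dots> = (\<Sum>a\<in>Prow. \<Sum>\<tau>\<in>Qcol. \<Sum>\<sigma>\<in>Prow. if a \<circ> \<tau> \<circ> \<sigma> = x then of_int (sign \<tau>) else 0)"
  proof (rule sum.cong[OF refl])
    fix a assume "a \<in> Prow"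
    then have a: "a \<in> Sk k" by (rule label_perms_Sk)
    have "a \<circ> (inv a \<circ> x) = x" by (simp add: o_assoc Sk_inv_o(2)[OF a])
    then have eq: "\<tau> \<circ> \<sigma> = inv a \<circ> x \<longleftrightarrow> a \<circ> \<tau> \<circ> \<sigma> = x" for \<tau> \<sigma> :: "nat \<Rightarrow> nat"
      using Sk_cancel_left[OF a, of "\<tau> \<circ> \<sigma>" "inv a \<circ> x"] by (simp add: o_assoc)
    show "csym (inv a \<circ> x) = (\<Sum>\<tau>\<in>Qcol. \<Sum>\<sigma>\<in>Prow. if a \<circ> \<tau> \<circ> \<sigma> = x then of_int (sign \<tau>) else 0)"
      unfolding csym_eq by (simp only: eq)
  qed
  finally show ?thesis .
qed

text \<open>e(x\<inverse>) = e(x): inverting a \<tau> \<sigma> gives \<sigma>\<inverse> \<tau>\<inverse> a\<inverse> with sign \<tau>\<inverse> = sign \<tau>, and the triple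
  sum is symmetric in its two P-indices.\<close>
lemma sandwich_inv:
  assumes x: "x \<in> Sk k"
  shows "sandwich (inv x) = sandwich x"
proof -
  have "sandwich (inv x)
      = (\<Sum>a\<in>Prow. \<Sum>\<tau>\<in>Qcol. \<Sum>\<sigma>\<in>Prow. if a \<circ> \<tau> \<circ> inv \<sigma> = inv x then of_int (sign \<tau>) else 0)"
    unfolding sandwich_eq[OF Sk_inv[OF x]]
    by (rule sum.cong[OF refl], rule sum.cong[OF refl], rule sum_label_perms_inv)
  also have "\<dots> = (\<Sum>a\<in>Prow. \<Sum>\<tau>\<in>Qcol. \<Sum>\<sigma>\<in>Prow.
      if a \<circ> inv \<tau> \<circ> inv \<sigma> = inv x then of_int (sign (inv \<tau>)) else 0)"
    by (rule sum.cong[OF refl], rule sum_label_perms_inv)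
  also have "\<dots> = (\<Sum>a\<in>Prow. \<Sum>\<tau>\<in>Qcol. \<Sum>\<sigma>\<in>Prow.
      if inv a \<circ> inv \<tau> \<circ> inv \<sigma> = inv x then of_int (sign (inv \<tau>)) else 0)"
    by (rule sum_label_perms_inv)
  also have "\<dots> = (\<Sum>a\<in>Prow. \<Sum>\<tau>\<in>Qcol. \<Sum>\<sigma>\<in>Prow. if \<sigma> \<circ> \<tau> \<circ> a = x then of_int (sign \<tau>) else 0)"
  proof (intro sum.cong refl)
    fix a \<tau> \<sigma> assume a: "a \<in> Prow" and t: "\<tau> \<in> Qcol" and s: "\<sigma> \<in> Prow"
    have aS: "a \<in> Sk k" and tS: "\<tau> \<in> Sk k" and sS: "\<sigma> \<in> Sk k" using a t s by (simp_all add: label_perms_Sk)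
    have "inv a \<circ> inv \<tau> \<circ> inv \<sigma> = inv (\<sigma> \<circ> \<tau> \<circ> a)"
      by (simp only: Sk_inv_comp[OF Sk_comp[OF sS tS] aS] Sk_inv_comp[OF sS tS] o_assoc)
    moreover have "inv (\<sigma> \<circ> \<tau> \<circ> a) = inv x \<longleftrightarrow> \<sigma> \<circ> \<tau> \<circ> a = x"
      using Sk_inv_inv[OF x] Sk_inv_inv[OF Sk_comp[OF Sk_comp[OF sS tS] aS]] by metis
    moreover have "sign (inv \<tau>) = sign \<tau>" by (rule sign_inverse[OF label_perms_permutation[OF t]])
    ultimately show "(if inv a \<circ> inv \<tau> \<circ> inv \<sigma> = inv x then of_int (sign (inv \<tau>)) else 0)
        = (if \<sigma> \<circ> \<tau> \<circ> a = x then of_int (sign \<tau>) else (0::rat))"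
      by simp
  qed
  also have "\<dots> = (\<Sum>a\<in>Prow. \<Sum>\<sigma>\<in>Prow. \<Sum>\<tau>\<in>Qcol. if \<sigma> \<circ> \<tau> \<circ> a = x then of_int (sign \<tau>) else 0)"
    by (rule sum.cong[OF refl], rule sum.swap)
  also have "\<dots> = (\<Sum>\<sigma>\<in>Prow. \<Sum>a\<in>Prow. \<Sum>\<tau>\<in>Qcol. if \<sigma> \<circ> \<tau> \<circ> a = x then of_int (sign \<tau>) else 0)"
    by (rule sum.swap)
  also have "\<dots> = (\<Sum>\<sigma>\<in>Prow. \<Sum>\<tau>\<in>Qcol. \<Sum>a\<in>Prow. if \<sigma> \<circ> \<tau> \<circ> a = x then of_int (sign \<tau>) else 0)"
    by (rule sum.cong[OF refl], rule sum.swap)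
  also have "\<dots> = sandwich x" by (rule sandwich_eq[OF x, symmetric])
  finally show ?thesis .
qed

text \<open>e(id) = \<Sum>a\<in>P. c(a\<inverse>) = |P|, since c(a\<inverse>) = c(id) = 1 for a \<in> P.\<close>
lemma sandwich_id: "sandwich id = of_nat (card Prow)"
proof -
  have "csym (inv a) = 1" if "a \<in> Prow" for a
    using csym_right[OF label_perms_inv[OF that], of id] csym_id by simp
  then show ?thesis
    unfolding sandwich_def ga_mult_eq[OF Sk_id] sum_row_sum by simp
qed

lemma card_row_group_pos: "0 < card Prow"
  using label_perms_id finite_label_perms card_gt_0_iff by blast

text \<open>Evaluating e^2 = |P| \<mu> e at id:  |P|^2 \<mu> = \<Sum>x e(x) e(x\<inverse>) = \<Sum>x e(x)^2 \<ge> e(id)^2 = |P|^2.\<close>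
lemma mu0_ge_1: "1 \<le> mu0"
proof -
  have "(of_nat (card Prow))\<^sup>2 = (sandwich id)\<^sup>2" by (simp add: sandwich_id)
  also have "\<dots> \<le> (\<Sum>a\<in>Sk k. (sandwich a)\<^sup>2)"
    by (rule member_le_sum[OF Sk_id]) (simp_all add: finite_Sk)
  also have "\<dots> = ga_mult k sandwich sandwich id"
    unfolding ga_mult_eq[OF Sk_id] by (intro sum.cong refl) (simp add: sandwich_inv power2_eq_square)
  also have "\<dots> = (of_nat (card Prow))\<^sup>2 * mu0"
    by (simp add: sandwich_square sandwich_id power2_eq_square)
  finally show ?thesis using card_row_group_pos by simp
qed

lemma young_mu_eq: "young_mu k num = mu0"
  unfolding young_mu_def
proof (rule the_equality)
  show "mu0 \<noteq> 0 \<and> ga_mult k csym csym = (\<lambda>x. mu0 * csym x)" using mu0_ge_1 csym_square by simp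
  fix m assume "m \<noteq> 0 \<and> ga_mult k csym csym = (\<lambda>x. m * csym x)"
  then have "ga_mult k csym csym id = m * csym id" by simp
  then show "m = mu0" using csym_id by (simp add: mu0_def)
qed

end

section \<open>Young symmetrizers on pure tensors\<close>

lemma ptensor_cong: "(\<And>i. i \<in> {1..k} \<Longrightarrow> y i = y' i) \<Longrightarrow> ptensor k y = ptensor k y'"
  unfolding ptensor_def by (intro ext prod.cong) auto

lemma perm_act_ptensor:
  fixes y :: "nat \<Rightarrow> complex ^ 'n"
  assumes s: "\<sigma> permutes {1..k}"
  shows "perm_act \<sigma> (ptensor k y) = ptensor k (y \<circ> \<sigma>)"
proof
  fix j :: "nat \<Rightarrow> 'n"
  have "perm_act \<sigma> (ptensor k y) j = (\<Prod>i\<in>{1..k}. y i $ j (inv \<sigma> i))"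
    by (simp add: perm_act_def ptensor_def)
  also have "\<dots> = (\<Prod>m\<in>{1..k}. y (\<sigma> m) $ j (inv \<sigma> (\<sigma> m)))"
    by (rule prod.reindex_bij_betw[OF permutes_imp_bij[OF s], symmetric])
  also have "\<dots> = ptensor k (y \<circ> \<sigma>) j"
    by (simp add: ptensor_def permutes_inverses(2)[OF s])
  finally show "perm_act \<sigma> (ptensor k y) j = ptensor k (y \<circ> \<sigma>) j" .
qed

text \<open>Linearly independent distinct vectors x_s (s \<in> S) admit a dual family \<phi>_s with
  \<phi>_s \<cdot> x_t = \<delta>_st (bilinear pairing, no conjugation): extend to a basis and take coordinates.\<close>
lemma dual_family:
  fixes x :: "'s \<Rightarrow> complex ^ 'n"
  assumes inj: "inj_on x S" and ind: "vec.independent (x ` S)"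
  shows "\<exists>\<phi>. \<forall>s\<in>S. \<forall>t\<in>S. (\<Sum>n\<in>UNIV. \<phi> s $ n * x t $ n) = (if s = t then 1 else 0)"
proof -
  define B where "B = vec.extend_basis (x ` S)"
  have sub: "x ` S \<subseteq> B" unfolding B_def by (rule vec.extend_basis_superset[OF ind])
  have indB: "vec.independent B" unfolding B_def by (rule vec.independent_extend_basis[OF ind])
  have spB: "vec.span B = UNIV" unfolding B_def by (rule vec.span_extend_basis[OF ind])
  define \<phi> where "\<phi> s = (\<chi> n. vec.representation B (axis n 1) (x s))" for s
  have "(\<Sum>n\<in>UNIV. \<phi> s $ n * x t $ n) = (if s = t then 1 else 0)" if s: "s \<in> S" and t: "t \<in> S" for s t
  proof -
    have "(\<Sum>n\<in>UNIV. \<phi> s $ n * x t $ n) = (\<Sum>n\<in>UNIV. vec.representation B (x t $ n *s axis n 1) (x s))"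
      unfolding \<phi>_def using vec.representation_scale[OF indB] spB by (simp add: mult.commute)
    also have "\<dots> = vec.representation B (\<Sum>n\<in>UNIV. x t $ n *s axis n 1) (x s)"
      using vec.representation_sum[OF indB, of UNIV "\<lambda>n. x t $ n *s axis n 1"] spB by simp
    also have "\<dots> = vec.representation B (x t) (x s)" by (simp only: basis_expansion)
    also have "\<dots> = (if x s = x t then 1 else 0)"
      using vec.representation_basis[OF indB, of "x t"] sub t by auto
    finally show ?thesis using inj s t by (auto dest: inj_onD)
  qed
  then show ?thesis by blast
qed

context tableau
begin

text \<open>The column antisymmetrization of the pure tensor whose box i carries the vector w(row i)
  if i lies in the first column and z(row i) otherwise.  Its diagonal col_alt x x is the column
  antisymmetrization of x_{\<alpha>(1)} \<otimes> ... \<otimes> x_{\<alpha>(k)}; separating the first column exhibits it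
  as multilinear and alternating in the vectors x_1, ..., x_r placed there.\<close>
definition col_alt :: "(nat \<Rightarrow> complex ^ 'n) \<Rightarrow> (nat \<Rightarrow> complex ^ 'n) \<Rightarrow> 'n tensor" where
  "col_alt w z = (\<lambda>j. \<Sum>\<tau>\<in>Qcol. of_int (sign \<tau>) *
      (\<Prod>i\<in>{1..k}. (if tcol i = 1 then w else z) (trow (\<tau> i)) $ j i))"

lemma col_alt_diag:
  "col_alt x x = (\<lambda>j. \<Sum>\<tau>\<in>Qcol. of_int (sign \<tau>) * ptensor k (\<lambda>i. x (trow (\<tau> i))) j)"
  unfolding col_alt_def ptensor_def by simp

text \<open>The row group fixes x_{\<alpha>(1)} \<otimes> ... \<otimes> x_{\<alpha>(k)}, so \<pi>^\<alpha> of it is |P|/\<mu> times its column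
  antisymmetrization.\<close>
lemma young_proj_ptensor:
  "young_proj k num (ptensor k (\<lambda>i. x (trow i)))
     = (\<lambda>j. (of_nat (card Prow) / of_rat mu0) * col_alt x x j)"
proof -
  let ?T = "ptensor k (\<lambda>i. x (trow i))"
  have row_fix: "perm_act \<sigma> ?T = ?T" if "\<sigma> \<in> Prow" for \<sigma>
    unfolding perm_act_ptensor[OF label_perms_permutes[OF that]]
    by (rule ptensor_cong) (simp add: label_permsD[OF that])
  have col: "perm_act \<tau> (\<lambda>j'. c * ?T j') j = c * ptensor k (\<lambda>i. x (trow (\<tau> i))) j"
    if "\<tau> \<in> Qcol" for \<tau> c j
    using perm_act_ptensor[OF label_perms_permutes[OF that], of "\<lambda>i. x (trow i)"]
    by (simp add: perm_act_def comp_def fun_eq_iff)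
  have "young_sym k num ?T = (\<lambda>j. of_nat (card Prow) * col_alt x x j)"
    unfolding young_sym_def row_group_label_perms col_group_label_perms col_alt_diag
    by (simp add: row_fix col sum_distrib_left mult_ac)
  then show ?thesis by (simp add: young_proj_def young_mu_eq)
qed

lemma col_alt_scale:
  assumes c: "\<And>s. s \<in> {1..r} \<Longrightarrow> y s = c s *s x s"
  shows "col_alt y y = (\<lambda>j. (\<Prod>i\<in>{1..k}. c (trow i)) * col_alt x x j)"
proof -
  have "ptensor k (\<lambda>i. y (trow (\<tau> i))) j = (\<Prod>i\<in>{1..k}. c (trow i)) * ptensor k (\<lambda>i. x (trow (\<tau> i))) j"
    if t: "\<tau> \<in> Qcol" for \<tau> j
  proof -
    have "ptensor k (\<lambda>i. y (trow (\<tau> i))) j = (\<Prod>i\<in>{1..k}. c (trow (\<tau> i)) * x (trow (\<tau> i)) $ j i)"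
      unfolding ptensor_def using c box_bounds(1)[OF label_perms_in[OF t]] by (intro prod.cong) auto
    also have "\<dots> = (\<Prod>i\<in>{1..k}. c (trow (\<tau> i))) * ptensor k (\<lambda>i. x (trow (\<tau> i))) j"
      by (simp add: prod.distrib ptensor_def)
    also have "(\<Prod>i\<in>{1..k}. c (trow (\<tau> i))) = (\<Prod>i\<in>{1..k}. c (trow i))"
      by (rule prod.reindex_bij_betw[OF permutes_imp_bij[OF label_perms_permutes[OF t]]])
    finally show ?thesis .
  qed
  then show ?thesis unfolding col_alt_diag by (simp add: sum_distrib_left mult_ac)
qed

text \<open>For independent x the tensor is nonzero: pairing it with \<phi>_{\<alpha>(1)} \<otimes> ... \<otimes> \<phi>_{\<alpha>(k)} for a dual
  family \<phi> kills every term with \<tau> \<noteq> id, since such \<tau> moves some box to another row.\<close>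
lemma col_alt_nonzero:
  fixes x \<phi> :: "nat \<Rightarrow> complex ^ 'n"
  assumes \<phi>: "\<And>s t. s \<in> {1..r} \<Longrightarrow> t \<in> {1..r} \<Longrightarrow>
      (\<Sum>n\<in>UNIV. \<phi> s $ n * x t $ n) = (if s = t then 1 else 0)"
  shows "col_alt x x \<noteq> (\<lambda>_. 0)"
proof
  assume zero: "col_alt x x = (\<lambda>_. 0)"
  define J where "J = PiE {1..k} (\<lambda>_. UNIV :: 'n set)"
  define \<Phi> where "\<Phi> j = (\<Prod>i\<in>{1..k}. \<phi> (trow i) $ j i)" for j :: "nat \<Rightarrow> 'n"
  have pair: "(\<Sum>j\<in>J. ptensor k (\<lambda>i. x (trow (\<tau> i))) j * \<Phi> j) = (if \<tau> = id then 1 else 0)"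
    if t: "\<tau> \<in> Qcol" for \<tau>
  proof -
    have "(\<Sum>j\<in>J. ptensor k (\<lambda>i. x (trow (\<tau> i))) j * \<Phi> j)
        = (\<Prod>i\<in>{1..k}. \<Sum>n\<in>UNIV. \<phi> (trow i) $ n * x (trow (\<tau> i)) $ n)"
      unfolding J_def ptensor_def \<Phi>_def prod.distrib[symmetric]
      by (subst prod_sum_PiE) (simp_all add: mult.commute)
    also have "\<dots> = (\<Prod>i\<in>{1..k}. if trow i = trow (\<tau> i) then 1 else 0)"
      using \<phi> box_bounds(1) label_perms_in[OF t] by (intro prod.cong) auto
    also have "\<dots> = (if \<tau> = id then 1 else 0)"
    proof (cases "\<tau> = id")
      case False
      then have "\<tau> \<notin> Prow" using row_col_trivial t by blast
      then obtain i where "i \<in> {1..k}" "trow (\<tau> i) \<noteq> trow i"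
        using label_perms_permutes[OF t] unfolding label_perms_def by blast
      then show ?thesis using False by (subst prod_zero) auto
    qed simp
    finally show ?thesis .
  qed
  have "(\<Sum>j\<in>J. col_alt x x j * \<Phi> j)
      = (\<Sum>\<tau>\<in>Qcol. of_int (sign \<tau>) * (\<Sum>j\<in>J. ptensor k (\<lambda>i. x (trow (\<tau> i))) j * \<Phi> j))"
    unfolding col_alt_diag by (simp only: sum_distrib_right sum_distrib_left mult.assoc) (rule sum.swap)
  also have "\<dots> = (\<Sum>\<tau>\<in>Qcol. if \<tau> = id then 1 else 0)"
    by (intro sum.cong refl) (simp add: pair)
  also have "\<dots> = 1" using label_perms_id[of k tcol] by (simp add: finite_label_perms)
  finally show False using zero by simp
qed

text \<open>Alternating: two equal vectors in the first column make col_alt vanish, since the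
  transposition of the corresponding first-column boxes lies in Q and reverses every term.\<close>
lemma col_alt_repeat:
  assumes s: "s \<in> {1..r}" and t: "t \<in> {1..r}" and st: "s \<noteq> t" and w: "w s = w t"
  shows "col_alt w z j = 0"
proof -
  obtain bs where bs: "bs \<in> {1..k}" "trow bs = s" "tcol bs = 1" using first_column_box[OF s] by blast
  obtain bt where bt: "bt \<in> {1..k}" "trow bt = t" "tcol bt = 1" using first_column_box[OF t] by blast
  have neq: "bs \<noteq> bt" using bs bt st by auto
  define tr where "tr = Transposition.transpose bs bt"
  have trQ: "tr \<in> Qcol"
  proof (rule label_permsI)
    show "tr permutes {1..k}" unfolding tr_def using bs bt by (simp add: permutes_swap_id)
    fix m show "tcol (tr m) = tcol m" unfolding tr_def using bs bt
      by (cases "m = bs"; cases "m = bt") (auto simp: Transposition.transpose_def)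
  qed
  define F where "F \<tau> = of_int (sign \<tau>) * (\<Prod>i\<in>{1..k}. (if tcol i = 1 then w else z) (trow (\<tau> i)) $ j i)"
    for \<tau>
  have flip: "F (tr \<circ> \<tau>) = - F \<tau>" if ta: "\<tau> \<in> Qcol" for \<tau>
  proof -
    have "sign (tr \<circ> \<tau>) = - sign \<tau>"
      using sign_compose[OF label_perms_permutation[OF trQ] label_perms_permutation[OF ta]] neq
      by (simp add: tr_def sign_swap_id)
    moreover have same: "(if tcol i = 1 then w else z) (trow (tr (\<tau> i))) = (if tcol i = 1 then w else z) (trow (\<tau> i))"
      if i: "i \<in> {1..k}" for i
    proof (cases "\<tau> i = bs \<or> \<tau> i = bt")
      case True
      then have "tcol i = 1" using label_permsD[OF ta i] bs bt by auto
      then show ?thesis using True w bs bt by (auto simp: tr_def Transposition.transpose_def)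
    qed (simp add: tr_def Transposition.transpose_def)
    then have "(\<Prod>i\<in>{1..k}. (if tcol i = 1 then w else z) (trow (tr (\<tau> i))) $ j i)
        = (\<Prod>i\<in>{1..k}. (if tcol i = 1 then w else z) (trow (\<tau> i)) $ j i)"
      by (intro prod.cong refl) (simp only:)
    ultimately show ?thesis unfolding F_def by simp
  qed
  have "(\<Sum>\<tau>\<in>Qcol. F \<tau>) = (\<Sum>\<tau>\<in>Qcol. F (tr \<circ> \<tau>))"
    by (rule sum.reindex_bij_betw[OF label_perms_bij_left[OF trQ], symmetric])
  also have "\<dots> = - (\<Sum>\<tau>\<in>Qcol. F \<tau>)" by (simp add: flip sum_negf)
  finally show ?thesis unfolding col_alt_def F_def by simp
qed

lemma col_alt_factor:
  assumes bs: "bs \<in> {1..k}" "trow bs = s" "tcol bs = 1" and ta: "\<tau> \<in> Qcol"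
  shows "(\<Prod>i\<in>{1..k}. (if tcol i = 1 then w(s := V) else z) (trow (\<tau> i)) $ j i)
     = V $ j (inv \<tau> bs) * (\<Prod>i\<in>{1..k} - {inv \<tau> bs}. (if tcol i = 1 then w else z) (trow (\<tau> i)) $ j i)"
proof -
  define i0 where "i0 = inv \<tau> bs"
  have tS: "\<tau> \<in> Sk k" by (rule label_perms_Sk[OF ta])
  have i0: "i0 \<in> {1..k}" unfolding i0_def by (rule label_perms_in[OF label_perms_inv[OF ta] bs(1)])
  have ti0: "\<tau> i0 = bs" unfolding i0_def by (rule Sk_inverses(2)[OF tS])
  have ci0: "tcol i0 = 1" using label_permsD[OF ta i0] ti0 bs by simp
  have other: "(if tcol i = 1 then w(s := V) else z) (trow (\<tau> i)) = (if tcol i = 1 then w else z) (trow (\<tau> i))"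
    if i: "i \<in> {1..k} - {i0}" for i
  proof -
    have "trow (\<tau> i) \<noteq> s" if "tcol i = 1"
    proof
      assume "trow (\<tau> i) = s"
      then have "\<tau> i = bs"
        using box_eq[OF label_perms_in[OF ta] bs(1)] label_permsD[OF ta] i that bs by auto
      then show False using i Sk_inverses(1)[OF tS, of i] unfolding i0_def by auto
    qed
    then show ?thesis by auto
  qed
  have "(\<Prod>i\<in>{1..k}. (if tcol i = 1 then w(s := V) else z) (trow (\<tau> i)) $ j i)
     = (if tcol i0 = 1 then w(s := V) else z) (trow (\<tau> i0)) $ j i0 *
       (\<Prod>i\<in>{1..k} - {i0}. (if tcol i = 1 then w(s := V) else z) (trow (\<tau> i)) $ j i)"
    by (rule prod.remove[OF _ i0]) simp
  also have "\<dots> = V $ j i0 * (\<Prod>i\<in>{1..k} - {i0}. (if tcol i = 1 then w else z) (trow (\<tau> i)) $ j i)"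
    using ci0 ti0 bs other by simp
  finally show ?thesis unfolding i0_def .
qed

lemma col_alt_linear:
  assumes s: "s \<in> {1..r}" and U: "finite U"
  shows "col_alt (w(s := (\<Sum>u\<in>U. c u *s v u))) z j = (\<Sum>u\<in>U. c u * col_alt (w(s := v u)) z j)"
proof -
  obtain bs where bs: "bs \<in> {1..k}" "trow bs = s" "tcol bs = 1" using first_column_box[OF s] by blast
  define R where "R \<tau> = (\<Prod>i\<in>{1..k} - {inv \<tau> bs}. (if tcol i = 1 then w else z) (trow (\<tau> i)) $ j i)" for \<tau>
  have "col_alt (w(s := (\<Sum>u\<in>U. c u *s v u))) z j
      = (\<Sum>\<tau>\<in>Qcol. of_int (sign \<tau>) * ((\<Sum>u\<in>U. c u *s v u) $ j (inv \<tau> bs) * R \<tau>))"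
    unfolding col_alt_def R_def by (intro sum.cong refl arg_cong2[where f="(*)"] col_alt_factor[OF bs])
  also have "\<dots> = (\<Sum>\<tau>\<in>Qcol. \<Sum>u\<in>U. c u * (of_int (sign \<tau>) * (v u $ j (inv \<tau> bs) * R \<tau>)))"
    by (simp add: sum_distrib_left sum_distrib_right mult_ac)
  also have "\<dots> = (\<Sum>u\<in>U. c u * (\<Sum>\<tau>\<in>Qcol. of_int (sign \<tau>) * (v u $ j (inv \<tau> bs) * R \<tau>)))"
    by (subst sum.swap) (simp add: sum_distrib_left)
  also have "\<dots> = (\<Sum>u\<in>U. c u * col_alt (w(s := v u)) z j)"
    unfolding col_alt_def R_def by (intro sum.cong refl arg_cong2[where f="(*)"] col_alt_factor[OF bs, symmetric])
  finally show ?thesis .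
qed

text \<open>Hence col_alt x x vanishes unless x_1, ..., x_r are distinct and linearly independent: write
  a dependent x_s as a combination of the others and use linearity and the alternating property.\<close>
lemma col_alt_dependent:
  fixes x :: "nat \<Rightarrow> complex ^ 'n"
  assumes dep: "\<not> (inj_on x {1..r} \<and> vec.independent (x ` {1..r}))"
  shows "col_alt x x = (\<lambda>_. 0)"
proof
  fix j
  show "col_alt x x j = 0"
  proof (cases "inj_on x {1..r}")
    case False
    then obtain s t where "s \<in> {1..r}" "t \<in> {1..r}" "s \<noteq> t" "x s = x t"
      unfolding inj_on_def by blast
    then show ?thesis by (rule col_alt_repeat)
  next
    case inj: True
    then have "vec.dependent (x ` {1..r})" using dep by simp
    then obtain s where s: "s \<in> {1..r}" and "x s \<in> vec.span (x ` {1..r} - {x s})"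
      unfolding vec.dependent_def by blast
    moreover have "x ` {1..r} - {x s} = x ` ({1..r} - {s})"
      using inj_on_image_set_diff[OF inj, of "{1..r}" "{s}"] s by simp
    ultimately have "x s \<in> vec.span (x ` ({1..r} - {s}))" by simp
    then obtain u where "x s = (\<Sum>v\<in>x ` ({1..r} - {s}). u v *s v)"
      by (auto simp: vec.span_finite)
    also have "\<dots> = (\<Sum>t\<in>{1..r} - {s}. u (x t) *s x t)"
      using inj_on_subset[OF inj, of "{1..r} - {s}"] by (simp add: sum.reindex)
    finally have comb: "x s = (\<Sum>t\<in>{1..r} - {s}. u (x t) *s x t)" .
    have "col_alt x x j = col_alt (x(s := \<Sum>t\<in>{1..r} - {s}. u (x t) *s x t)) x j"
      by (simp only: comb[symmetric] fun_upd_triv)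
    also have "\<dots> = (\<Sum>t\<in>{1..r} - {s}. u (x t) * col_alt (x(s := x t)) x j)"
      by (rule col_alt_linear[OF s]) simp
    also have "\<dots> = 0"
    proof (intro sum.neutral ballI)
      fix t assume "t \<in> {1..r} - {s}"
      then have "col_alt (x(s := x t)) x j = 0" using s by (intro col_alt_repeat[of s t]) auto
      then show "u (x t) * col_alt (x(s := x t)) x j = 0" by simp
    qed
    finally show ?thesis .
  qed
qed

lemma col_alt_nonzero_iff:
  fixes x :: "nat \<Rightarrow> complex ^ 'n"
  shows "col_alt x x \<noteq> (\<lambda>_. 0) \<longleftrightarrow> inj_on x {1..r} \<and> vec.independent (x ` {1..r})"
  using col_alt_dependent dual_family[of x "{1..r}"] col_alt_nonzero by metis

lemma young_proj_nonzero_iff: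
  fixes x :: "nat \<Rightarrow> complex ^ 'n"
  shows "young_proj k num (ptensor k (\<lambda>i. x (trow i))) \<noteq> (\<lambda>_. 0) \<longleftrightarrow>
           inj_on x {1..r} \<and> vec.independent (x ` {1..r})"
proof -
  have "(of_nat (card Prow) / of_rat mu0 :: complex) \<noteq> 0"
    using card_row_group_pos mu0_ge_1 by auto
  then show ?thesis
    unfolding young_proj_ptensor col_alt_nonzero_iff[symmetric] by (simp add: fun_eq_iff)
qed

lemma young_proj_rescale:
  fixes x y :: "nat \<Rightarrow> complex ^ 'n"
  assumes "\<forall>s\<in>{1..r}. \<exists>c. c \<noteq> 0 \<and> y s = c *s x s"
  shows "\<exists>c. c \<noteq> 0 \<and> young_proj k num (ptensor k (\<lambda>i. y (trow i))) =
                       (\<lambda>j. c * young_proj k num (ptensor k (\<lambda>i. x (trow i))) j)"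
proof -
  obtain c where c: "\<forall>s\<in>{1..r}. c s \<noteq> 0 \<and> y s = c s *s x s"
    using bchoice[OF assms] by blast
  have "(\<Prod>i\<in>{1..k}. c (trow i)) \<noteq> 0" using c box_bounds(1) by simp
  moreover have "col_alt y y = (\<lambda>j. (\<Prod>i\<in>{1..k}. c (trow i)) * col_alt x x j)"
    using c by (intro col_alt_scale) simp
  ultimately show ?thesis unfolding young_proj_ptensor by (intro exI[of _ "\<Prod>i\<in>{1..k}. c (trow i)"]) auto
qed

end

theorem mainTheorem3:
  fixes k r :: nat and lam :: "nat \<Rightarrow> nat" and num :: "nat \<Rightarrow> nat \<times> nat"
    and x :: "nat \<Rightarrow> complex ^ 'n"
  assumes "young_tableau k r lam num"
  shows "(young_proj k num (ptensor k (\<lambda>i. x (tab_row num i))) \<noteq> (\<lambda>_. 0) \<longleftrightarrow>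
            inj_on x {1..r} \<and> vec.independent (x ` {1..r}))
       \<and> (young_proj k num (ptensor k (\<lambda>i. x (tab_row num i))) \<noteq> (\<lambda>_. 0) \<longrightarrow>
            (\<forall>y :: nat \<Rightarrow> complex ^ 'n.
               (\<forall>i\<in>{1..r}. \<exists>c::complex. c \<noteq> 0 \<and> y i = c *s x i) \<longrightarrow>
               (\<exists>c::complex. c \<noteq> 0 \<and>
                  young_proj k num (ptensor k (\<lambda>i. y (tab_row num i))) =
                  (\<lambda>j. c * young_proj k num (ptensor k (\<lambda>i. x (tab_row num i))) j))))"
proof -
  interpret tableau k r lam num by (rule tableau.intro[OF assms])
  show ?thesis using young_proj_nonzero_iff young_proj_rescale by blast
qed

end
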